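(* Let $C>0$ and $\delta>0$, let $f \in C((0,\infty);(0,\infty))$ be asymptotically increasing with $\lim_{x\to\infty} f(x)/x = \infty$, and let $\psi \in C([-\delta,0];(0,\infty))$. Consider \[ z'(t) = C\int_{t-\delta}^t f(z(s))\,ds, \quad t\ge 0; \qquad z(t)=\psi(t), \quad t\in[-\delta,0]. \] If the solution satisfies $z \in C([-\delta,\infty);(0,\infty))$ and $\bar F(x) = \int_0^x f(s)\,ds$ for $x>0$, then \[ \lim_{t\to\infty} \frac{\bar F(z(t-\delta))}{\bar F(z(t))} = 0. \]
   Context: "$f$ is asymptotically increasing" means that there is a continuous increasing function $\phi:(0,\infty)\to(0,\infty)$ with $f(x)/\phi(x)\to 1$ as $x\to\infty$. *)

theory Defs
  imports "HOL-Analysis.Analysis"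
begin

definition asymp_increasing :: "(real \<Rightarrow> real) \<Rightarrow> bool" where
  "asymp_increasing f \<longleftrightarrow>
     (\<exists>\<phi>::real \<Rightarrow> real. continuous_on {0<..} \<phi> \<and> (\<forall>x>0. \<phi> x > 0) \<and>
        strict_mono_on {0<..} \<phi> \<and> ((\<lambda>x. f x / \<phi> x) \<longlongrightarrow> 1) at_top)"

end

(* Since f(z) > 0, the solution z is nondecreasing on [0, \<infinity>); f is bounded below by a positive
   constant on [z(0), \<infinity>), so z' is eventually bounded below and z \<rightarrow> \<infinity>.  Superlinearity of f then
   gives, for every M, z' \<ge> C (\<delta>/2) M z(t - \<delta>) on [t - \<delta>/2, t] for large t, because the delay window
   of such points contains [t - \<delta>, t - \<delta>/2]; hence z(t) / z(t - \<delta>) \<rightarrow> \<infinity>.  Finally, if f is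
   asymptotic to an increasing \<phi>, then Fbar(a) = O(a \<phi>(a)) while Fbar(b) \<ge> (b - a) \<phi>(a) / 2, so
   Fbar(a) / Fbar(b) is small as soon as a is large and b / a is large.  The initial datum \<psi>
   enters only through the positivity of z. *)

theory Submission
  imports Defs
begin

lemma increment_ge_of_derivative_ge:
  fixes g g' :: "real \<Rightarrow> real"
  assumes "a \<le> b"
    and deriv: "\<And>x. x \<in> {a..b} \<Longrightarrow> (g has_real_derivative g' x) (at x within {a..b})"
    and bound: "\<And>x. x \<in> {a..b} \<Longrightarrow> c \<le> g' x"
  shows "c * (b - a) \<le> g b - g a"
proof -
  obtain \<xi> where \<xi>: "\<xi> \<in> {a..b}" "g b - g a = g' \<xi> * (b - a)"
    using mvt_very_simple[OF \<open>a \<le> b\<close>, of g "\<lambda>x h. g' x * h"] deriv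
    by (auto simp: has_field_derivative_def)
  show ?thesis
    using mult_right_mono[OF bound[OF \<xi>(1)], of "b - a"] \<xi>(2) \<open>a \<le> b\<close> by simp
qed

lemma integral_ge_const_real:
  fixes f :: "real \<Rightarrow> real"
  assumes "f integrable_on {a..b}" and "a \<le> b" and "\<And>x. x \<in> {a..b} \<Longrightarrow> c \<le> f x"
  shows "c * (b - a) \<le> integral {a..b} f"
proof -
  have "integral {a..b} (\<lambda>_. c) \<le> integral {a..b} f"
    using assms by (intro integral_le) auto
  then show ?thesis using \<open>a \<le> b\<close> by (simp add: mult.commute)
qed

lemma integral_le_const_real:
  fixes f :: "real \<Rightarrow> real"
  assumes "f integrable_on {a..b}" and "a \<le> b" and "\<And>x. x \<in> {a..b} \<Longrightarrow> f x \<le> c"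
  shows "integral {a..b} f \<le> c * (b - a)"
proof -
  have "integral {a..b} f \<le> integral {a..b} (\<lambda>_. c)"
    using assms by (intro integral_le) auto
  then show ?thesis using \<open>a \<le> b\<close> by (simp add: mult.commute)
qed

lemma integral_nonneg_Ioo:
  fixes f :: "real \<Rightarrow> real"
  assumes "f integrable_on {a..b}" and "\<And>x. x \<in> {a<..<b} \<Longrightarrow> 0 \<le> f x"
  shows "0 \<le> integral {a..b} f"
  unfolding integral_open_interval_real
  using assms by (intro integral_nonneg) (simp_all add: integrable_on_open_interval_real)

lemma eventually_ge_mult_if_superlinear:
  fixes f :: "real \<Rightarrow> real"
  assumes "filterlim (\<lambda>x. f x / x) at_top at_top"
  shows "eventually (\<lambda>x. M * x \<le> f x) at_top"
proof -
  have "eventually (\<lambda>x. M \<le> f x / x \<and> 0 < x) at_top"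
    using assms unfolding filterlim_at_top by (intro eventually_conj eventually_gt_at_top) auto
  then show ?thesis
    by eventually_elim (clarify, simp add: pos_le_divide_eq)
qed

lemma continuous_pos_bounded_below_if_eventually_ge:
  fixes f :: "real \<Rightarrow> real"
  assumes cont: "continuous_on {a..} f" and pos: "\<And>x. a \<le> x \<Longrightarrow> 0 < f x"
    and ev: "eventually (\<lambda>x. c \<le> f x) at_top" and "0 < c"
  shows "\<exists>m>0. \<forall>x\<ge>a. m \<le> f x"
proof -
  obtain X where X: "\<And>x. X \<le> x \<Longrightarrow> c \<le> f x"
    using ev by (auto simp: eventually_at_top_linorder)
  have "continuous_on {a..max a X} f"
    by (rule continuous_on_subset[OF cont]) auto
  then obtain x\<^sub>0 where x\<^sub>0: "x\<^sub>0 \<in> {a..max a X}" "\<And>y. y \<in> {a..max a X} \<Longrightarrow> f x\<^sub>0 \<le> f y"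
    using continuous_attains_inf[OF compact_Icc, of a "max a X" f] by auto
  have "min (f x\<^sub>0) c \<le> f x" if "a \<le> x" for x
    using x\<^sub>0(2)[of x] X[of x] that by (cases "x \<le> max a X") (auto simp: min.coboundedI1 min.coboundedI2)
  moreover have "0 < min (f x\<^sub>0) c"
    using pos x\<^sub>0(1) \<open>0 < c\<close> by auto
  ultimately show ?thesis by blast
qed

lemma asymp_increasing_integral_bounds:
  fixes f :: "real \<Rightarrow> real"
  assumes "asymp_increasing f"
    and f_pos: "\<And>x. 0 < x \<Longrightarrow> 0 < f x" and f_int: "\<And>x. 0 < x \<Longrightarrow> f integrable_on {0..x}"
  obtains \<phi> :: "real \<Rightarrow> real" and K X where "0 < X" "0 < K"
    "\<And>a. X \<le> a \<Longrightarrow> 1 \<le> a * \<phi> a"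
    "\<And>a. X \<le> a \<Longrightarrow> integral {0..a} f \<le> K * (a * \<phi> a)"
    "\<And>a b. X \<le> a \<Longrightarrow> a \<le> b \<Longrightarrow> (b - a) * (\<phi> a / 2) \<le> integral {0..b} f"
proof -
  obtain \<phi> where phi_pos: "\<And>x. 0 < x \<Longrightarrow> 0 < \<phi> x" and phi_mono: "strict_mono_on {0<..} \<phi>"
    and lim: "((\<lambda>x. f x / \<phi> x) \<longlongrightarrow> 1) at_top"
    using \<open>asymp_increasing f\<close> unfolding asymp_increasing_def by blast
  have phi_le: "\<phi> y \<le> \<phi> a" if "0 < y" "y \<le> a" for y a
    using phi_mono that unfolding strict_mono_on_def by (cases "y = a") (auto intro: less_imp_le)
  obtain X\<^sub>1 where X\<^sub>1: "\<And>x. X\<^sub>1 \<le> x \<Longrightarrow> \<bar>f x / \<phi> x - 1\<bar> < 1/2"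
    using tendstoD[OF lim, of "1/2"] by (auto simp: eventually_at_top_linorder dist_real_def)
  define X where "X = max (max X\<^sub>1 1) (1 / \<phi> 1)"
  have "0 < X" by (simp add: X_def)
  have f_phi: "\<phi> y / 2 \<le> f y \<and> f y \<le> 2 * \<phi> y" if "X \<le> y" for y
  proof -
    have "\<bar>f y / \<phi> y - 1\<bar> < 1/2" using X\<^sub>1 that by (simp add: X_def)
    then have "1/2 < f y / \<phi> y" "f y / \<phi> y < 2" unfolding abs_less_iff by linarith+
    then show ?thesis
      using phi_pos[of y] \<open>0 < X\<close> that by (simp add: field_simps)
  qed
  have P_ge: "1 \<le> a * \<phi> a" if "X \<le> a" for a
  proof -
    have "1 \<le> a" "1 / \<phi> 1 \<le> a" using that by (auto simp: X_def)
    then have "1 \<le> a * \<phi> 1"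
      using phi_pos[of 1] by (simp add: divide_le_eq mult.commute)
    also have "\<dots> \<le> a * \<phi> a"
      using phi_le[of 1 a] \<open>1 \<le> a\<close> by simp
    finally show ?thesis .
  qed
  define K where "K = \<bar>integral {0..X} f\<bar> + 2"
  have upper: "integral {0..a} f \<le> K * (a * \<phi> a)" if "X \<le> a" for a
  proof -
    have int_a: "f integrable_on {0..a}" using f_int \<open>0 < X\<close> that by simp
    have "integral {X..a} f \<le> 2 * \<phi> a * (a - X)"
    proof (rule integral_le_const_real)
      show "f integrable_on {X..a}" using integrable_subinterval_real[OF int_a] \<open>0 < X\<close> by simp
      fix y assume "y \<in> {X..a}"
      then show "f y \<le> 2 * \<phi> a" using f_phi[of y] phi_le[of y a] \<open>0 < X\<close> by auto
    qed (fact that)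
    also have "\<dots> \<le> 2 * (a * \<phi> a)"
      using phi_pos[of a] \<open>0 < X\<close> that by (simp add: algebra_simps)
    finally have "integral {0..a} f \<le> \<bar>integral {0..X} f\<bar> + 2 * (a * \<phi> a)"
      using Henstock_Kurzweil_Integration.integral_combine[OF _ that int_a] \<open>0 < X\<close> by simp
    moreover have "\<bar>integral {0..X} f\<bar> \<le> \<bar>integral {0..X} f\<bar> * (a * \<phi> a)"
      using mult_left_mono[OF P_ge[OF that], of "\<bar>integral {0..X} f\<bar>"] by simp
    ultimately show ?thesis
      unfolding K_def distrib_right by linarith
  qed
  have lower: "(b - a) * (\<phi> a / 2) \<le> integral {0..b} f" if "X \<le> a" "a \<le> b" for a b
  proof -
    have int_b: "f integrable_on {0..b}" using f_int \<open>0 < X\<close> that by simp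
    have "\<phi> a / 2 * (b - a) \<le> integral {a..b} f"
    proof (rule integral_ge_const_real)
      show "f integrable_on {a..b}" using integrable_subinterval_real[OF int_b] \<open>0 < X\<close> that by simp
      fix y assume "y \<in> {a..b}"
      then show "\<phi> a / 2 \<le> f y" using f_phi[of y] phi_le[of a y] \<open>0 < X\<close> that by auto
    qed (fact that(2))
    moreover have "0 \<le> integral {0..a} f"
      using f_pos \<open>0 < X\<close> that
      by (intro integral_nonneg_Ioo integrable_subinterval_real[OF int_b]) (auto intro: less_imp_le)
    ultimately show ?thesis
      using Henstock_Kurzweil_Integration.integral_combine[OF _ that(2) int_b] \<open>0 < X\<close> that
      by (simp add: mult.commute)
  qed
  have "0 < K" by (simp add: K_def add_nonneg_pos)
  show ?thesis using that[OF \<open>0 < X\<close> \<open>0 < K\<close> P_ge upper lower] .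
qed

lemma asymp_increasing_integral_ratio_small:
  fixes f :: "real \<Rightarrow> real"
  assumes "asymp_increasing f"
    and "\<And>x. 0 < x \<Longrightarrow> 0 < f x" and "\<And>x. 0 < x \<Longrightarrow> f integrable_on {0..x}"
    and "0 < \<epsilon>"
  obtains A N where
    "\<And>a b. A \<le> a \<Longrightarrow> N * a \<le> b \<Longrightarrow> \<bar>integral {0..a} f / integral {0..b} f\<bar> < \<epsilon>"
proof -
  obtain \<phi> :: "real \<Rightarrow> real" and K X where "0 < X" "0 < K"
    and P_ge: "\<And>a. X \<le> a \<Longrightarrow> 1 \<le> a * \<phi> a"
    and upper: "\<And>a. X \<le> a \<Longrightarrow> integral {0..a} f \<le> K * (a * \<phi> a)"
    and lower: "\<And>a b. X \<le> a \<Longrightarrow> a \<le> b \<Longrightarrow> (b - a) * (\<phi> a / 2) \<le> integral {0..b} f"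
    using asymp_increasing_integral_bounds assms(1-3) by metis
  define N where "N = 2 + 2 * K / \<epsilon>"
  have N_gt: "2 * K / \<epsilon> < N - 1" "1 < N"
    using divide_pos_pos[OF mult_pos_pos[OF _ \<open>0 < K\<close>] \<open>0 < \<epsilon>\<close>, of 2] by (auto simp: N_def)
  have "\<bar>integral {0..a} f / integral {0..b} f\<bar> < \<epsilon>" if a: "X \<le> a" and b: "N * a \<le> b" for a b
  proof -
    define P where "P = a * \<phi> a"
    have "1 \<le> P" using P_ge[OF a] by (simp add: P_def)
    have "(N - 1) * a \<le> b - a" using b by (simp add: algebra_simps)
    moreover have "0 \<le> (N - 1) * a" using N_gt \<open>0 < X\<close> a by simp
    ultimately have "a \<le> b" by linarith
    have "0 < \<phi> a"
      using \<open>1 \<le> P\<close> \<open>0 < X\<close> a zero_less_mult_pos[of a "\<phi> a"] by (simp add: P_def)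
    have "(N - 1) * P / 2 \<le> (b - a) * (\<phi> a / 2)"
      using mult_right_mono[OF \<open>(N - 1) * a \<le> b - a\<close>, of "\<phi> a / 2"] \<open>0 < \<phi> a\<close>
      by (simp add: P_def)
    also have "\<dots> \<le> integral {0..b} f" by (rule lower[OF a \<open>a \<le> b\<close>])
    finally have Fb: "(N - 1) * P / 2 \<le> integral {0..b} f" .
    have Fa: "0 \<le> integral {0..a} f" using lower[OF a order.refl] by simp
    have "0 < (N - 1) * P / 2" using N_gt \<open>1 \<le> P\<close> by simp
    then have "\<bar>integral {0..a} f / integral {0..b} f\<bar> = integral {0..a} f / integral {0..b} f"
      using Fa Fb by simp
    also have "\<dots> \<le> K * P / ((N - 1) * P / 2)"
      using Fa Fb upper[OF a] \<open>0 < (N - 1) * P / 2\<close> \<open>0 < K\<close> \<open>1 \<le> P\<close>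
      by (intro frac_le) (simp_all add: P_def)
    also have "\<dots> = 2 * K / (N - 1)" using N_gt \<open>1 \<le> P\<close> by (simp add: field_simps)
    also have "\<dots> < \<epsilon>" using N_gt \<open>0 < \<epsilon>\<close> by (simp add: divide_less_eq mult.commute pos_divide_less_eq)
    finally show ?thesis .
  qed
  then show ?thesis using that by blast
qed

locale delay_integral_equation =
  fixes C \<delta> :: real and f z :: "real \<Rightarrow> real"
  assumes C_pos: "0 < C" and delta_pos: "0 < \<delta>"
    and f_cont: "continuous_on {0<..} f" and f_pos: "\<And>x. 0 < x \<Longrightarrow> 0 < f x"
    and f_superlin: "filterlim (\<lambda>x. f x / x) at_top at_top"
    and z_cont: "continuous_on {-\<delta>..} z" and z_pos: "\<And>t. -\<delta> \<le> t \<Longrightarrow> 0 < z t"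
    and z_ode: "\<And>t. 0 \<le> t \<Longrightarrow>
      (z has_real_derivative C * integral {t-\<delta>..t} (\<lambda>s. f (z s))) (at t within {0..})"
begin

lemma f_z_integrable: "-\<delta> \<le> a \<Longrightarrow> (\<lambda>s. f (z s)) integrable_on {a..b}"
  by (intro integrable_continuous_interval continuous_on_compose2[OF f_cont]
      continuous_on_subset[OF z_cont]) (auto intro: z_pos)

lemma f_z_pos: "-\<delta> \<le> s \<Longrightarrow> 0 < f (z s)"
  by (intro f_pos z_pos)

lemma window_integral_ge:
  assumes "0 \<le> t" "t - \<delta> \<le> a" "a \<le> b" "b \<le> t" and "\<And>u. u \<in> {a..b} \<Longrightarrow> c \<le> f (z u)"
  shows "c * (b - a) \<le> integral {t-\<delta>..t} (\<lambda>s. f (z s))"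
proof -
  have "c * (b - a) \<le> integral {a..b} (\<lambda>s. f (z s))"
    using assms delta_pos by (intro integral_ge_const_real f_z_integrable) auto
  also have "\<dots> \<le> integral {t-\<delta>..t} (\<lambda>s. f (z s))"
    using assms f_z_pos by (intro integral_subset_le f_z_integrable) (auto intro: less_imp_le)
  finally show ?thesis .
qed

lemma z_increment_ge:
  assumes "0 \<le> a" "a \<le> b" and "\<And>t. t \<in> {a..b} \<Longrightarrow> c \<le> integral {t-\<delta>..t} (\<lambda>s. f (z s))"
  shows "C * c * (b - a) \<le> z b - z a"
proof (rule increment_ge_of_derivative_ge[OF \<open>a \<le> b\<close>])
  fix t assume "t \<in> {a..b}"
  then show "(z has_real_derivative C * integral {t-\<delta>..t} (\<lambda>s. f (z s))) (at t within {a..b})"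
    using assms by (intro has_field_derivative_subset[OF z_ode]) auto
  show "C * c \<le> C * integral {t-\<delta>..t} (\<lambda>s. f (z s))"
    using assms \<open>t \<in> {a..b}\<close> C_pos by simp
qed

lemma z_mono:
  assumes "0 \<le> a" "a \<le> b"
  shows "z a \<le> z b"
proof -
  have "C * 0 * (b - a) \<le> z b - z a"
  proof (rule z_increment_ge[OF assms])
    fix t assume "t \<in> {a..b}"
    then show "0 \<le> integral {t-\<delta>..t} (\<lambda>s. f (z s))"
      using assms f_z_pos by (intro integral_nonneg f_z_integrable) (auto intro: less_imp_le)
  qed
  then show ?thesis by simp
qed

lemma z_tendsto_at_top: "filterlim z at_top at_top"
proof -
  have "continuous_on {z 0..} f"
    using z_pos[of 0] delta_pos by (intro continuous_on_subset[OF f_cont]) auto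
  moreover have "eventually (\<lambda>x. 1 \<le> f x) at_top"
    using eventually_ge_mult_if_superlinear[OF f_superlin, of 1] eventually_ge_at_top[of 1]
    by eventually_elim simp
  moreover have "0 < f x" if "z 0 \<le> x" for x
    using that z_pos[of 0] delta_pos by (intro f_pos) simp
  ultimately obtain m where "0 < m" and m: "\<And>x. z 0 \<le> x \<Longrightarrow> m \<le> f x"
    using continuous_pos_bounded_below_if_eventually_ge[of "z 0" f 1] by auto
  have "C * (m * \<delta>) * (t - \<delta>) \<le> z t" if "\<delta> \<le> t" for t
  proof -
    have "C * (m * \<delta>) * (t - \<delta>) \<le> z t - z \<delta>"
    proof (rule z_increment_ge)
      fix s assume s: "s \<in> {\<delta>..t}"
      have "m \<le> f (z u)" if "u \<in> {s - \<delta>..s}" for u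
        using that s by (intro m z_mono) auto
      then show "m * \<delta> \<le> integral {s-\<delta>..s} (\<lambda>s. f (z s))"
        using window_integral_ge[of s "s - \<delta>" s m] s delta_pos by simp
    qed (use that delta_pos in auto)
    then show ?thesis using z_pos[of \<delta>] delta_pos by simp
  qed
  then have "eventually (\<lambda>t. C * (m * \<delta>) * (t - \<delta>) \<le> z t) at_top"
    by (auto simp: eventually_at_top_linorder)
  moreover have "filterlim (\<lambda>t. C * (m * \<delta>) * (t - \<delta>)) at_top at_top"
    using C_pos \<open>0 < m\<close> delta_pos
    by (intro filterlim_tendsto_pos_mult_at_top[OF tendsto_const] filterlim_tendsto_add_at_top
        [OF tendsto_const[of "-\<delta>"] filterlim_ident, simplified]) auto
  ultimately show ?thesis by (rule filterlim_at_top_mono[rotated])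
qed

lemma eventually_z_ge_mult_delayed: "eventually (\<lambda>t. N * z (t - \<delta>) \<le> z t) at_top"
proof -
  define M where "M = 4 * \<bar>N\<bar> / (C * \<delta>^2)"
  have "0 \<le> M" using C_pos by (simp add: M_def)
  have "N \<le> C * (M * \<delta> / 2) * (\<delta> / 2)"
    using C_pos delta_pos by (simp add: M_def power2_eq_square)
  obtain X where X: "\<And>x. X \<le> x \<Longrightarrow> M * x \<le> f x"
    using eventually_ge_mult_if_superlinear[OF f_superlin] by (auto simp: eventually_at_top_linorder)
  obtain T\<^sub>1 where T\<^sub>1: "\<And>t. T\<^sub>1 \<le> t \<Longrightarrow> X \<le> z t"
    using z_tendsto_at_top unfolding filterlim_at_top eventually_at_top_linorder by blast
  define T where "T = max T\<^sub>1 0"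
  have "0 \<le> T" by (simp add: T_def)
  have "N * z (t - \<delta>) \<le> z t" if "T + \<delta> \<le> t" for t
  proof -
    have f_ge: "M * z (t - \<delta>) \<le> f (z u)" if "u \<in> {t - \<delta>..t - \<delta>/2}" for u
    proof -
      have "M * z (t - \<delta>) \<le> M * z u"
        using that \<open>T + \<delta> \<le> t\<close> \<open>0 \<le> T\<close> \<open>0 \<le> M\<close> by (intro mult_left_mono z_mono) auto
      also have "\<dots> \<le> f (z u)"
        using that \<open>T + \<delta> \<le> t\<close> by (intro X T\<^sub>1) (auto simp: T_def)
      finally show ?thesis .
    qed
    have "C * (M * z (t - \<delta>) * (\<delta> / 2)) * (t - (t - \<delta> / 2)) \<le> z t - z (t - \<delta> / 2)"
    proof (rule z_increment_ge)
      fix s assume "s \<in> {t - \<delta> / 2..t}"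
      then have "M * z (t - \<delta>) * (t - \<delta> / 2 - (t - \<delta>)) \<le> integral {s-\<delta>..s} (\<lambda>s. f (z s))"
        using that \<open>0 \<le> T\<close> delta_pos by (rule_tac window_integral_ge[OF _ _ _ _ f_ge]) auto
      then show "M * z (t - \<delta>) * (\<delta> / 2) \<le> integral {s-\<delta>..s} (\<lambda>s. f (z s))"
        by simp
    qed (use that \<open>0 \<le> T\<close> delta_pos in auto)
    moreover have "0 < z (t - \<delta> / 2)" "0 < z (t - \<delta>)"
      using that \<open>0 \<le> T\<close> delta_pos by (auto intro: z_pos)
    moreover have "N * z (t - \<delta>) \<le> C * (M * z (t - \<delta>) * (\<delta> / 2)) * (t - (t - \<delta> / 2))"
      using mult_right_mono[OF \<open>N \<le> C * (M * \<delta> / 2) * (\<delta> / 2)\<close>, of "z (t - \<delta>)"] \<open>0 < z (t - \<delta>)\<close>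
      by (simp add: algebra_simps)
    ultimately show ?thesis by linarith
  qed
  then show ?thesis by (auto simp: eventually_at_top_linorder)
qed

end

theorem lemma6p2:
  fixes C \<delta> :: real and f \<psi> z Fbar :: "real \<Rightarrow> real"
  assumes C_pos: "C > 0" and delta_pos: "\<delta> > 0"
    and f_cont: "continuous_on {0<..} f" and f_pos: "\<forall>x>0. f x > 0"
    and f_asymp: "asymp_increasing f"
    and f_superlin: "filterlim (\<lambda>x. f x / x) at_top at_top"
    and psi_cont: "continuous_on {-\<delta>..0} \<psi>" and psi_pos: "\<forall>t\<in>{-\<delta>..0}. \<psi> t > 0"
    and z_cont: "continuous_on {-\<delta>..} z" and z_pos: "\<forall>t\<ge>-\<delta>. z t > 0"
    and z_init: "\<forall>t\<in>{-\<delta>..0}. z t = \<psi> t"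
    and z_ode: "\<forall>t\<ge>0. (z has_real_derivative
                   C * integral {t-\<delta>..t} (\<lambda>s. f (z s))) (at t within {0..})"
    and f_int: "\<forall>x>0. f integrable_on {0..x}"
    and Fbar_def: "\<forall>x>0. Fbar x = integral {0..x} f"
  shows "((\<lambda>t. Fbar (z (t - \<delta>)) / Fbar (z t)) \<longlongrightarrow> 0) at_top"
proof (rule tendstoI)
  interpret delay_integral_equation C \<delta> f z
    using C_pos delta_pos f_cont f_pos f_superlin z_cont z_pos z_ode by unfold_locales blast+
  fix \<epsilon> :: real assume "0 < \<epsilon>"
  obtain A N where AN:
    "\<And>a b. A \<le> a \<Longrightarrow> N * a \<le> b \<Longrightarrow> \<bar>integral {0..a} f / integral {0..b} f\<bar> < \<epsilon>"
    using asymp_increasing_integral_ratio_small[OF f_asymp _ _ \<open>0 < \<epsilon>\<close>] f_pos f_int by metis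
  have "filterlim (\<lambda>t. z (t - \<delta>)) at_top at_top"
    using filterlim_tendsto_add_at_top[OF tendsto_const[of "-\<delta>"] filterlim_ident]
    by (intro filterlim_compose[OF z_tendsto_at_top]) simp
  then have "eventually (\<lambda>t. A \<le> z (t - \<delta>)) at_top"
    by (simp add: filterlim_at_top)
  moreover note eventually_z_ge_mult_delayed[of N] eventually_ge_at_top[of 0]
  ultimately show "eventually (\<lambda>t. dist (Fbar (z (t - \<delta>)) / Fbar (z t)) 0 < \<epsilon>) at_top"
  proof eventually_elim
    case (elim t)
    then have "Fbar (z (t - \<delta>)) = integral {0..z (t - \<delta>)} f" "Fbar (z t) = integral {0..z t} f"
      using Fbar_def z_pos delta_pos by auto
    then show ?case using AN[OF elim(1,2)] by simp
  qed
qed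

end
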